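(* Let $M$ be a magma satisfying $(xy)z = xx$, $x(yz) = xx$ and $xx = yy$ for all $x,y,z\in M$. Then $M$ satisfies $xy = yx$ for all $x,y\in M$ if and only if $M$ avoids both magmas $F$ (on $\{0,1,2,3\}$) and $G$ (on $\{0,1,2,3,4\}$) with Cayley tables \[ \begin{array}{c|cccc} F & 0 & 1 & 2 & 3 \\ \hline 0 & 0 & 0 & 0 & 0 \\ 1 & 0 & 0 & 3 & 0 \\ 2 & 0 & 0 & 0 & 0 \\ 3 & 0 & 0 & 0 & 0 \end{array} \qquad \begin{array}{c|ccccc} G & 0 & 1 & 2 & 3 & 4\\ \hline 0 & 0 & 0 & 0 & 0 & 0\\ 1 & 0 & 0 & 3 & 0 & 0\\ 2 & 0 & 4 & 0 & 0 & 0\\ 3 & 0 & 0 & 0 & 0 & 0\\ 4 & 0 & 0 & 0 & 0 & 0 \end{array}. \]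
   Context: A magma is a nonempty set with a binary operation, written by juxtaposition. A magma $M$ avoids a magma $F$ if no submagma of $M$ is isomorphic to $F$. *)

theory Defs
  imports Main
begin

definition is_submagma :: "('a \<Rightarrow> 'a \<Rightarrow> 'a) \<Rightarrow> 'a set \<Rightarrow> bool" where
  "is_submagma mult S \<longleftrightarrow> S \<noteq> {} \<and> (\<forall>x\<in>S. \<forall>y\<in>S. mult x y \<in> S)"

definition magma_iso :: "'b set \<Rightarrow> ('b \<Rightarrow> 'b \<Rightarrow> 'b) \<Rightarrow> 'a set \<Rightarrow> ('a \<Rightarrow> 'a \<Rightarrow> 'a) \<Rightarrow> ('b \<Rightarrow> 'a) \<Rightarrow> bool" where
  "magma_iso A opA S opS h \<longleftrightarrow> bij_betw h A S \<and> (\<forall>x\<in>A. \<forall>y\<in>A. h (opA x y) = opS (h x) (h y))"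

definition avoids :: "('a \<Rightarrow> 'a \<Rightarrow> 'a) \<Rightarrow> 'b set \<Rightarrow> ('b \<Rightarrow> 'b \<Rightarrow> 'b) \<Rightarrow> bool" where
  "avoids mult A opA \<longleftrightarrow> \<not> (\<exists>S h. is_submagma mult S \<and> magma_iso A opA S mult h)"

definition F_carrier :: "nat set" where "F_carrier = {0,1,2,3}"
definition F_op :: "nat \<Rightarrow> nat \<Rightarrow> nat" where
  "F_op x y = (if x = 1 \<and> y = 2 then 3 else 0)"

definition G_carrier :: "nat set" where "G_carrier = {0,1,2,3,4}"
definition G_op :: "nat \<Rightarrow> nat \<Rightarrow> nat" where
  "G_op x y = (if x = 1 \<and> y = 2 then 3 else if x = 2 \<and> y = 1 then 4 else 0)"

end

theory Submission
  imports Defs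
begin

text \<open>A copy of a magma inside a commutative magma is commutative, while in F and G the
  elements 1 and 2 do not commute. Conversely, the laws force every square, and every product with
  a product as a factor, to equal one absorbing element 0. So if ab \<noteq> ba, neither a nor b is a
  product, and {0, a, b, ab, ba} is a copy of G when ab, ba \<noteq> 0; otherwise 0, a, b and the
  nonzero one of ab, ba form a copy of F.\<close>

lemma commutative_avoids_noncommutative:
  assumes comm: "\<And>x y. mult x y = mult y x"
    and closed: "\<forall>x\<in>A. \<forall>y\<in>A. opA x y \<in> A"
    and "x \<in> A" "y \<in> A" "opA x y \<noteq> opA y x"
  shows "avoids mult A opA"
  unfolding avoids_def
proof
  assume "\<exists>S h. is_submagma mult S \<and> magma_iso A opA S mult h"
  then obtain S h where "bij_betw h A S" and hom: "\<forall>x\<in>A. \<forall>y\<in>A. h (opA x y) = mult (h x) (h y)"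
    unfolding magma_iso_def by blast
  then have "inj_on h A"
    by (simp add: bij_betw_def)
  moreover have "h (opA x y) = h (opA y x)"
    using hom assms(3,4) comm by metis
  ultimately show False
    using closed assms(3-5)
    by (auto dest: inj_onD)
qed

lemma embedding_not_avoids:
  assumes "A \<noteq> {}" "inj_on h A"
    and closed: "\<forall>x\<in>A. \<forall>y\<in>A. opA x y \<in> A"
    and hom: "\<forall>x\<in>A. \<forall>y\<in>A. h (opA x y) = mult (h x) (h y)"
  shows "\<not> avoids mult A opA"
proof -
  have "is_submagma mult (h ` A)"
    unfolding is_submagma_def using assms by (auto simp flip: hom)
  moreover have "magma_iso A opA (h ` A) mult h"
    unfolding magma_iso_def using assms by (simp add: inj_on_imp_bij_betw)
  ultimately show ?thesis
    unfolding avoids_def by blast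
qed

locale null_square_magma =
  fixes mult :: "'a \<Rightarrow> 'a \<Rightarrow> 'a" (infixl \<open>\<cdot>\<close> 70)
  assumes left_product: "(x \<cdot> y) \<cdot> z = x \<cdot> x"
    and right_product: "x \<cdot> (y \<cdot> z) = x \<cdot> x"
    and squares_eq: "x \<cdot> x = y \<cdot> y"
begin

definition zero :: 'a
  where "zero = (THE z. \<forall>x. x \<cdot> x = z)"

lemma square_eq_zero [simp]: "x \<cdot> x = zero"
  unfolding zero_def by (rule sym, rule the_equality) (use squares_eq in auto)

lemma product_mult_eq_zero [simp]: "(x \<cdot> y) \<cdot> z = zero"
  using left_product by simp

lemma mult_product_eq_zero [simp]: "z \<cdot> (x \<cdot> y) = zero"
  using right_product by simp

lemma zero_mult [simp]: "zero \<cdot> x = zero"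
  by (metis square_eq_zero product_mult_eq_zero)

lemma mult_zero [simp]: "x \<cdot> zero = zero"
  by (metis square_eq_zero mult_product_eq_zero)

lemma noncommuting_not_product:
  assumes "a \<cdot> b \<noteq> b \<cdot> a"
  shows "a \<noteq> x \<cdot> y" "b \<noteq> x \<cdot> y"
  using assms by auto

lemma not_avoids_F:
  assumes "a \<cdot> b \<noteq> b \<cdot> a" "b \<cdot> a = zero"
  shows "\<not> avoids mult F_carrier F_op"
proof (rule embedding_not_avoids)
  let ?h = "nth [zero, a, b, a \<cdot> b]"
  have "a \<noteq> zero" "b \<noteq> zero" "a \<noteq> a \<cdot> b" "b \<noteq> a \<cdot> b"
    using noncommuting_not_product[OF assms(1)] square_eq_zero by metis+
  then have "distinct [zero, a, b, a \<cdot> b]"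
    using assms by auto
  then show "inj_on ?h F_carrier"
    by (rule inj_on_nth) (simp add: F_carrier_def)
  show "\<forall>x\<in>F_carrier. \<forall>y\<in>F_carrier. ?h (F_op x y) = ?h x \<cdot> ?h y"
    using assms by (simp add: F_carrier_def F_op_def)
qed (auto simp: F_carrier_def F_op_def)

lemma not_avoids_G:
  assumes "a \<cdot> b \<noteq> b \<cdot> a" "a \<cdot> b \<noteq> zero" "b \<cdot> a \<noteq> zero"
  shows "\<not> avoids mult G_carrier G_op"
proof (rule embedding_not_avoids)
  let ?h = "nth [zero, a, b, a \<cdot> b, b \<cdot> a]"
  have "a \<noteq> zero" "b \<noteq> zero" "a \<noteq> a \<cdot> b" "b \<noteq> a \<cdot> b" "a \<noteq> b \<cdot> a" "b \<noteq> b \<cdot> a"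
    using noncommuting_not_product[OF assms(1)] square_eq_zero by metis+
  then have "distinct [zero, a, b, a \<cdot> b, b \<cdot> a]"
    using assms by auto
  then show "inj_on ?h G_carrier"
    by (rule inj_on_nth) (simp add: G_carrier_def)
  show "\<forall>x\<in>G_carrier. \<forall>y\<in>G_carrier. ?h (G_op x y) = ?h x \<cdot> ?h y"
    by (simp add: G_carrier_def G_op_def)
qed (auto simp: G_carrier_def G_op_def)

lemma commutative_if_avoids_F_G:
  assumes "avoids mult F_carrier F_op" "avoids mult G_carrier G_op"
  shows "x \<cdot> y = y \<cdot> x"
  using not_avoids_F[of x y] not_avoids_F[of y x] not_avoids_G[of x y] assms by metis

end

theorem mainTheorem10:
  fixes mult :: "'a \<Rightarrow> 'a \<Rightarrow> 'a"
  assumes "\<And>x y z. mult (mult x y) z = mult x x"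
    and "\<And>x y z. mult x (mult y z) = mult x x"
    and "\<And>x y. mult x x = mult y y"
  shows "(\<forall>x y. mult x y = mult y x) \<longleftrightarrow>
           (avoids mult F_carrier F_op \<and> avoids mult G_carrier G_op)"
proof
  assume "\<forall>x y. mult x y = mult y x"
  then show "avoids mult F_carrier F_op \<and> avoids mult G_carrier G_op"
    using commutative_avoids_noncommutative[of mult F_carrier F_op 1 2]
      commutative_avoids_noncommutative[of mult G_carrier G_op 1 2]
    by (simp add: F_carrier_def F_op_def G_carrier_def G_op_def)
next
  interpret null_square_magma mult
    using assms by unfold_locales
  assume "avoids mult F_carrier F_op \<and> avoids mult G_carrier G_op"
  then show "\<forall>x y. mult x y = mult y x"
    using commutative_if_avoids_F_G by blast
qed

end
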